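(* For any integer $a$ and any positive odd integer $n$, $$\det\left[\left\lfloor\frac{aj-(a+1)k}{n}\right\rfloor\right]_{1\leqslant j,k\leqslant n}=-\left(\frac{a(a+1)}{n}\right)$$ and $$\det\left[2^{\lfloor\frac{aj-(a+1)k}{n}\rfloor}-1\right]_{1\leqslant j,k\leqslant n}=-\left(\frac{a(a+1)}{n}\right)2^{(1-3n)/2}.$$
   Context: $\lfloor x\rfloor$ is the largest integer not exceeding $x$. $\left(\frac{\cdot}{n}\right)$ denotes the Jacobi symbol modulo the positive odd integer $n$ (equal to $0$ when the argument is not coprime to $n$, and $\left(\frac{\cdot}{1}\right)=1$). *)

theory Defs
  imports "HOL-Number_Theory.Number_Theory" "Jordan_Normal_Form.Determinant"
begin

definition Jacobi :: "int \<Rightarrow> nat \<Rightarrow> int" where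
  "Jacobi a n = (\<Prod>p\<in>prime_factors n. Legendre a (int p) ^ multiplicity p n)"

end

theory Submission
  imports Defs
begin

text \<open>Let \<open>\<sigma> j\<close>, \<open>\<alpha> j\<close> be the remainder and quotient of \<open>a (j + 1)\<close> modulo \<open>n\<close>, and \<open>\<tau> k\<close>,
  \<open>\<beta> k\<close> those of \<open>(a + 1) (k + 1)\<close>. If \<open>a\<close> and \<open>a + 1\<close> are prime to \<open>n\<close>, then \<open>\<sigma>\<close> and
  \<open>\<tau>\<close> are permutations whose signs multiply to the Jacobi symbol \<open>(a (a + 1) / n)\<close> by
  Zolotarev's lemma, and the floor in the matrix entry is \<open>\<alpha> j - \<beta> k - [\<sigma> j < \<tau> k]\<close>.
  Permuting rows by \<open>\<sigma>\<close> and columns by \<open>\<tau>\<close> and scaling rows and columns by powers of \<open>t\<close>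
  turns \<open>t ^ floor - 1\<close> into a rank-one perturbation of the matrix with entries \<open>1 / t\<close>
  above the diagonal and \<open>1\<close> on and below it; the matrix determinant lemma and a telescoping
  sum then give the determinant for every \<open>t \<noteq> 0\<close> of a field. If a prime \<open>p\<close> divides \<open>n\<close>
  and \<open>a\<close> (or \<open>a + 1\<close>), three rows (or columns) at distance \<open>n / p\<close> are linearly
  dependent, and the Jacobi symbol vanishes as well. The integer matrix is the limit of
  \<open>(t ^ floor - 1) / (t - 1)\<close> as \<open>t \<rightarrow> 1\<close>, and \<open>t = 2\<close> gives the second formula.\<close>

section \<open>Signs of permutations of \<open>{..<N}\<close>\<close>

lemma permutes_lessThanI:
  fixes f :: "nat \<Rightarrow> nat"
  assumes "\<And>x. x < N \<Longrightarrow> f x < N" "inj_on f {..<N}" "\<And>x. x \<ge> N \<Longrightarrow> f x = x"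
  shows "f permutes {..<N}"
proof (rule bij_imp_permutes)
  have "f ` {..<N} = {..<N}" using assms by (intro endo_inj_surj) auto
  then show "bij_betw f {..<N} {..<N}" using assms(2) by (simp add: bij_betw_def)
qed (use assms(3) in auto)

lemma conjugate_permutation:
  assumes p: "p permutes A" "finite A" and f: "inj_on f A"
    and on: "\<And>x. x \<in> A \<Longrightarrow> q (f x) = f (p x)" and off: "\<And>y. y \<notin> f ` A \<Longrightarrow> q y = y"
  shows "permutation q" and "sign q = sign p"
proof -
  have q: "q = map_permutation A f p"
  proof
    fix y show "q y = map_permutation A f p y"
      by (cases "y \<in> f ` A") (auto simp: map_permutation_def restrict_id_def on off f)
  qed
  have "q permutes f ` A"
    unfolding q using p f by (intro map_permutation_permutes) (auto simp: bij_betw_def)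
  then show "permutation q" using p(2) by (metis finite_imageI permutes_imp_permutation)
  show "sign q = sign p" unfolding q by (rule sign_map_permutation[OF f p])
qed

lemma sign_funpow:
  assumes "permutation f"
  shows "permutation (f ^^ d) \<and> sign (f ^^ d) = sign f ^ d"
proof (induction d)
  case (Suc d)
  then show ?case
    by (simp only: funpow.simps(2) power_Suc permutation_compose[OF assms] sign_compose[OF assms])
qed simp

lemma restrict_id_split:
  assumes "\<And>y. y \<notin> B \<Longrightarrow> f y \<notin> B"
  shows "f = restrict_id f B \<circ> restrict_id f (- B)"
  using assms by (auto simp: restrict_id_def fun_eq_iff)

lemma sign_blockwise:
  fixes k :: nat
  assumes A: "finite A" and p: "\<And>i. i < k \<Longrightarrow> p i permutes A"
    and e: "inj_on (\<lambda>(i, x). e i x) ({..<k} \<times> A)"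
    and on: "\<And>i x. i < k \<Longrightarrow> x \<in> A \<Longrightarrow> F (e i x) = e i (p i x)"
    and off: "\<And>y. y \<notin> (\<lambda>(i, x). e i x) ` ({..<k} \<times> A) \<Longrightarrow> F y = y"
  shows "permutation F \<and> sign F = (\<Prod>i<k. sign (p i))"
  using p e on off
proof (induction k arbitrary: F)
  case 0
  then have "F = id" by auto
  then show ?case by simp
next
  case (Suc k)
  define B where "B = e k ` A"
  have blocks: "(\<lambda>(i, x). e i x) ` ({..<Suc k} \<times> A) = (\<lambda>(i, x). e i x) ` ({..<k} \<times> A) \<union> B"
    by (auto simp: B_def lessThan_Suc)
  have not_B: "e i x \<notin> B" if "i < k" "x \<in> A" for i x
  proof
    assume "e i x \<in> B"
    then obtain x' where "x' \<in> A" "e i x = e k x'" by (auto simp: B_def)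
    then show False using inj_onD[OF Suc.prems(2), of "(i, x)" "(k, x')"] that by auto
  qed
  have "F y \<notin> B" if "y \<notin> B" for y
  proof (cases "y \<in> (\<lambda>(i, x). e i x) ` ({..<k} \<times> A)")
    case True
    then obtain i x where "i < k" "x \<in> A" "y = e i x" by auto
    then show ?thesis using not_B Suc.prems(1,3) permutes_in_image[of "p i" A] by auto
  qed (use that Suc.prems(4) blocks in auto)
  then have F: "F = restrict_id F B \<circ> restrict_id F (- B)" by (rule restrict_id_split)
  have G: "permutation (restrict_id F (- B)) \<and> sign (restrict_id F (- B)) = (\<Prod>i<k. sign (p i))"
  proof (rule Suc.IH)
    show "inj_on (\<lambda>(i, x). e i x) ({..<k} \<times> A)"
      by (rule inj_on_subset[OF Suc.prems(2)]) auto
    show "restrict_id F (- B) (e i x) = e i (p i x)" if "i < k" "x \<in> A" for i x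
      using that not_B Suc.prems(3) by (simp add: restrict_id_def)
    show "restrict_id F (- B) y = y" if "y \<notin> (\<lambda>(i, x). e i x) ` ({..<k} \<times> A)" for y
      using that Suc.prems(4) by (auto simp: restrict_id_def blocks)
  qed (use Suc.prems(1) in auto)
  have pk: "p k permutes A" using Suc.prems(1) by simp
  have H: "permutation (restrict_id F B)" "sign (restrict_id F B) = sign (p k)"
    by (rule conjugate_permutation[OF pk A, of "e k"];
        use Suc.prems(2,3) in \<open>force simp: restrict_id_def B_def inj_on_def\<close>)+
  show ?case
    by (subst (1 2) F) (simp add: G H permutation_compose sign_compose mult.commute)
qed

definition shift_mod :: "nat \<Rightarrow> nat \<Rightarrow> nat \<Rightarrow> nat" where
  "shift_mod N d x = (if x < N then (x + d) mod N else x)"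

definition scale_mod :: "nat \<Rightarrow> nat \<Rightarrow> nat \<Rightarrow> nat" where
  "scale_mod N c x = (if x < N then (c * x) mod N else x)"

lemma shift_mod_permutes: "shift_mod N d permutes {..<N}"
proof (rule permutes_lessThanI)
  show "inj_on (shift_mod N d) {..<N}"
  proof
    fix x y assume "x \<in> {..<N}" "y \<in> {..<N}" "shift_mod N d x = shift_mod N d y"
    then show "x = y" by (auto simp: shift_mod_def cong_def[symmetric] cong_add_rcancel_nat cong_less_modulus_unique_nat)
  qed
qed (auto simp: shift_mod_def)

lemma scale_mod_permutes:
  assumes "coprime c N"
  shows "scale_mod N c permutes {..<N}"
proof (rule permutes_lessThanI)
  show "inj_on (scale_mod N c) {..<N}"
  proof
    fix x y assume "x \<in> {..<N}" "y \<in> {..<N}" "scale_mod N c x = scale_mod N c y"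
    then show "x = y"
      using assms by (auto simp: scale_mod_def cong_def[symmetric] cong_mult_lcancel_nat cong_less_modulus_unique_nat)
  qed
qed (auto simp: scale_mod_def)

lemma permutation_shift_mod: "permutation (shift_mod N d)"
  using shift_mod_permutes permutes_imp_permutation by blast

lemma scale_mod_mult: "scale_mod N (c * d) = scale_mod N c \<circ> scale_mod N d"
  by (auto simp: fun_eq_iff scale_mod_def mod_mult_right_eq mult.assoc)

lemma shift_mod_eq_funpow: "shift_mod N d = shift_mod N 1 ^^ d"
proof (induction d)
  case (Suc d)
  have "shift_mod N (Suc d) = shift_mod N 1 \<circ> shift_mod N d"
    by (auto simp: shift_mod_def fun_eq_iff mod_Suc_eq)
  then show ?case using Suc by simp
qed (auto simp: shift_mod_def fun_eq_iff)

lemma sign_shift_mod_1: "N > 0 \<Longrightarrow> sign (shift_mod N 1) = (-1) ^ (N - 1)"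
proof (induction N)
  case (Suc N)
  show ?case
  proof (cases "N = 0")
    case True
    then have "shift_mod (Suc N) 1 = id" by (auto simp: shift_mod_def fun_eq_iff)
    then show ?thesis using True by simp
  next
    case False
    have "shift_mod (Suc N) 1 = shift_mod N 1 \<circ> Transposition.transpose (N - 1) N"
    proof
      fix x show "shift_mod (Suc N) 1 x = (shift_mod N 1 \<circ> Transposition.transpose (N - 1) N) x"
        using False by (cases "x < N - 1"; cases "x = N - 1"; cases "x = N")
          (auto simp: shift_mod_def Transposition.transpose_def)
    qed
    then have "sign (shift_mod (Suc N) 1) = sign (shift_mod N 1) * sign (Transposition.transpose (N - 1) N)"
      by (simp add: sign_compose permutation_shift_mod permutation_swap_id)
    also have "\<dots> = (-1) ^ (Suc N - 1)" using Suc False by (cases N) (auto simp: sign_swap_id)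
    finally show ?thesis .
  qed
qed simp

lemma sign_shift_mod:
  assumes "N > 0"
  shows "sign (shift_mod N d) = (-1) ^ ((N - 1) * d)"
proof -
  have "sign (shift_mod N d) = sign (shift_mod N 1) ^ d"
    by (subst shift_mod_eq_funpow) (rule conjunct2[OF sign_funpow[OF permutation_shift_mod]])
  then show ?thesis by (simp only: sign_shift_mod_1[OF assms] power_mult)
qed

lemma sign_shift_mod_odd: "odd N \<Longrightarrow> sign (shift_mod N d) = 1"
  by (simp add: sign_shift_mod odd_pos)

section \<open>Zolotarev's lemma\<close>

lemma Legendre_cong:
  assumes "[x = y] (mod p)"
  shows "Legendre x p = Legendre y p"
proof -
  have "[x = 0] (mod p) \<longleftrightarrow> [y = 0] (mod p)" "QuadRes p x \<longleftrightarrow> QuadRes p y"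
    unfolding QuadRes_def using assms cong_sym cong_trans by blast+
  then show ?thesis by (simp add: Legendre_def)
qed

lemma primroot_half_power_cong:
  assumes p: "prime p" "p > 2" and g: "residue_primroot p g"
  shows "[int g ^ ((p - 1) div 2) = -1] (mod int p)"
proof -
  have ord: "ord p g = p - 1" and "coprime p g"
    using g p by (auto simp: residue_primroot_def totient_prime)
  then have "g > 0" using p by (intro Nat.gr0I) auto
  define h where "h = int g ^ ((p - 1) div 2)"
  have "h * h = int g ^ ((p - 1) div 2 + (p - 1) div 2)" by (simp add: h_def power_add)
  also have "(p - 1) div 2 + (p - 1) div 2 = p - 1" using prime_odd_nat[OF p] by presburger
  also have "[int g ^ (p - 1) = int 1] (mod int p)"
    unfolding of_nat_power[symmetric] cong_int_iff using ord_works[of g p] ord by simp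
  finally have "[h = 1] (mod int p) \<or> [h = -1] (mod int p)"
    using p \<open>g > 0\<close> by (intro cong_square) (auto simp: h_def)
  moreover have "\<not> [h = 1] (mod int p)"
  proof
    assume "[h = 1] (mod int p)"
    then have "[g ^ ((p - 1) div 2) = 1] (mod p)"
      by (simp add: h_def flip: cong_int_iff)
    then have "p - 1 dvd (p - 1) div 2" by (simp only: ord_divides ord)
    then have "p - 1 \<le> (p - 1) div 2" using p by (intro dvd_imp_le) auto
    then show False using p by presburger
  qed
  ultimately show ?thesis by (simp add: h_def)
qed

lemma Legendre_primroot_power:
  assumes p: "prime p" "p > 2" and g: "residue_primroot p g"
  shows "Legendre (int g ^ k) (int p) = (-1) ^ k"
proof -
  have "[Legendre (int g ^ k) (int p) = (int g ^ k) ^ ((p - 1) div 2)] (mod int p)"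
    by (rule euler_criterion[OF p])
  also have "(int g ^ k) ^ ((p - 1) div 2) = (int g ^ ((p - 1) div 2)) ^ k"
    by (simp add: power_mult[symmetric] mult.commute)
  also have "[\<dots> = (-1) ^ k] (mod int p)"
    by (intro cong_pow primroot_half_power_cong[OF p g])
  finally have cong: "[Legendre (int g ^ k) (int p) = (-1) ^ k] (mod int p)" .
  have "coprime (int p) (int g ^ k)" using g by (simp add: residue_primroot_def)
  have "\<not> int p dvd int g ^ k"
  proof
    assume "int p dvd int g ^ k"
    with \<open>coprime (int p) (int g ^ k)\<close> have "is_unit (int p)" using coprime_absorb_left by blast
    then show False using p by simp
  qed
  then have "\<not> [int g ^ k = 0] (mod int p)" by (simp add: cong_0_iff)
  then have "Legendre (int g ^ k) (int p) \<in> {1, -1}" by (auto simp: Legendre_def)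
  moreover have "(-1 :: int) ^ k \<in> {1, -1}" by (cases "even k") auto
  moreover have "\<not> [1 = -1] (mod int p)" using p by (auto simp: cong_iff_dvd_diff zdvd_not_zless)
  ultimately show ?thesis using cong by (auto simp: cong_sym_eq)
qed

text \<open>Multiplication by a power of a primitive root is conjugate, via discrete logarithms, to a
  rotation of \<open>{..<p - 1}\<close>.\<close>
lemma sign_scale_mod_primroot_power:
  assumes p: "prime p" "odd p" and g: "residue_primroot p g" and c: "[c = g ^ k] (mod p)"
  shows "sign (scale_mod p c) = (-1) ^ k"
proof -
  have p1: "p > 1" using p prime_gt_1_nat by blast
  define e where "e i = g ^ i mod p" for i
  have bij: "bij_betw e {..<p - 1} {0<..<p}"
    using residue_primroot_is_generator[OF p1 g] p by (simp add: e_def[abs_def] totient_prime totatives_prime)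
  have "ord p g = p - 1" "coprime p g"
    using g p by (auto simp: residue_primroot_def totient_prime)
  then have e_mod: "e (x mod (p - 1)) = e x" for x
    unfolding e_def cong_def[symmetric] order_divides_expdiff[OF \<open>coprime p g\<close>]
    by (simp add: \<open>ord p g = p - 1\<close> cong_def)
  have "sign (scale_mod p c) = sign (shift_mod (p - 1) k)"
  proof (rule conjugate_permutation(2)[OF shift_mod_permutes _ bij_betw_imp_inj_on[OF bij]])
    show "scale_mod p c (e x) = e (shift_mod (p - 1) k x)" if "x \<in> {..<p - 1}" for x
    proof -
      have "[c * g ^ x = g ^ (x + k)] (mod p)"
        using cong_scalar_right[OF c, of "g ^ x"] by (simp add: power_add mult.commute)
      then have "scale_mod p c (e x) = e (x + k)"
        using p1 by (simp add: scale_mod_def e_def cong_def mod_mult_right_eq)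
      then show ?thesis using that e_mod[of "x + k"] by (simp add: shift_mod_def)
    qed
    show "scale_mod p c y = y" if "y \<notin> e ` {..<p - 1}" for y
      using that bij_betw_imp_surj_on[OF bij] by (cases "y = 0") (auto simp: scale_mod_def)
  qed simp
  also have "\<dots> = (-1) ^ k"
    using p p1 by (simp add: sign_shift_mod power_mult)
  finally show ?thesis .
qed

lemma sign_scale_mod_prime:
  assumes p: "prime p" "odd p" and c: "coprime c p"
  shows "sign (scale_mod p c) = Legendre (int c) (int p)"
proof -
  have p2: "p > 2" using p prime_ge_2_nat[of p] by (cases "p = 2") auto
  obtain g where g: "residue_primroot p g" using prime_primitive_root_exists[of p] p prime_gt_1_nat by blast
  have "\<not> p dvd c" using c p by (meson coprime_absorb_right not_prime_unit)
  then have "c mod p \<in> totatives p"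
    using p prime_gt_0_nat[of p] by (auto simp: totatives_prime intro: Nat.gr0I)
  then obtain k where "c mod p = g ^ k mod p"
    using residue_primroot_is_generator[OF _ g] p2 by (force simp: bij_betw_def)
  then have ck: "[c = g ^ k] (mod p)" by (simp add: cong_def)
  then have "[int c = int g ^ k] (mod int p)" by (simp add: cong_int_iff flip: of_nat_power)
  then have "Legendre (int c) (int p) = Legendre (int g ^ k) (int p)" by (rule Legendre_cong)
  then show ?thesis
    using sign_scale_mod_primroot_power[OF p g ck] Legendre_primroot_power[OF p(1) p2 g] by simp
qed

lemma digits_eq_iff:
  fixes m :: nat
  assumes "x < m" "x' < m"
  shows "x + m * r = x' + m * r' \<longleftrightarrow> x = x' \<and> r = r'"
proof
  assume eq: "x + m * r = x' + m * r'"
  have "(x + m * r) mod m = (x' + m * r') mod m" "(x + m * r) div m = (x' + m * r') div m"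
    by (simp_all only: eq)
  then show "x = x' \<and> r = r'" using assms by simp
qed simp

lemma digits_cover:
  fixes m :: nat
  assumes "y < m * q"
  shows "y = y mod m + m * (y div m)" "y mod m < m" "y div m < q"
proof -
  have "m > 0" using assms by (intro Nat.gr0I) simp
  then show "y = y mod m + m * (y div m)" "y mod m < m" "y div m < q"
    using assms by (simp_all add: less_mult_imp_div_less mult.commute)
qed

lemma digits_less:
  fixes m :: nat
  assumes "x < m" "r < q"
  shows "x + m * r < m * q"
proof -
  have "x + m * r < m * (r + 1)" using assms by simp
  also have "\<dots> \<le> m * q" using assms by (intro mult_le_mono2) auto
  finally show ?thesis .
qed

text \<open>Writing \<open>x = i + m * r\<close> with \<open>i < m\<close> and \<open>r < q\<close>, multiplication by \<open>c\<close> modulo \<open>m * q\<close>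
  first replaces the high digit \<open>r\<close> by \<open>(c * r + c * i div m) mod q\<close> and then the low digit \<open>i\<close>
  by \<open>c * i mod m\<close>.\<close>
definition scale_high :: "nat \<Rightarrow> nat \<Rightarrow> nat \<Rightarrow> nat \<Rightarrow> nat" where
  "scale_high m q c x = (if x < m * q then x mod m + m * ((c * (x div m) + c * (x mod m) div m) mod q) else x)"

definition scale_low :: "nat \<Rightarrow> nat \<Rightarrow> nat \<Rightarrow> nat \<Rightarrow> nat" where
  "scale_low m q c x = (if x < m * q then (c * (x mod m)) mod m + m * (x div m) else x)"

lemma scale_mod_mult_modulus: "scale_mod (m * q) c = scale_low m q c \<circ> scale_high m q c"
proof
  fix x show "scale_mod (m * q) c x = (scale_low m q c \<circ> scale_high m q c) x"
  proof (cases "x < m * q")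
    case True
    define i r where "i = x mod m" and "r = x div m"
    have i: "i < m" and r: "r < q" and x: "x = i + m * r"
      using digits_cover[of x m q] True by (simp_all add: i_def r_def)
    define r' where "r' = (c * r + c * i div m) mod q"
    have "r' < q" using r by (simp add: r'_def)
    have "scale_low m q c (scale_high m q c x) = (c * i) mod m + m * r'"
      using True digits_less[OF i \<open>r' < q\<close>] i by (simp add: scale_high_def scale_low_def i_def r_def r'_def)
    moreover have "scale_mod (m * q) c x = (c * i) mod m + m * r'"
    proof -
      have "scale_mod (m * q) c x = m * ((c * x) div m mod q) + (c * x) mod m"
        using True by (simp add: scale_mod_def mod_mult2_eq)
      also have "c * x = c * i + m * (c * r)" by (simp add: x algebra_simps)
      finally show ?thesis using i by (simp add: r'_def)
    qed
    ultimately show ?thesis by simp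
  qed (simp add: scale_mod_def scale_high_def scale_low_def)
qed

lemma sign_scale_low:
  assumes "coprime c m"
  shows "permutation (scale_low m q c) \<and> sign (scale_low m q c) = sign (scale_mod m c) ^ q"
proof -
  have "permutation (scale_low m q c) \<and> sign (scale_low m q c) = (\<Prod>r<q. sign (scale_mod m c))"
  proof (rule sign_blockwise[where e = "\<lambda>r x. x + m * r" and p = "\<lambda>_. scale_mod m c"])
    show "inj_on (\<lambda>(r, x). x + m * r) ({..<q} \<times> {..<m})"
      by (auto simp: inj_on_def digits_eq_iff)
    show "scale_low m q c (x + m * r) = scale_mod m c x + m * r" if "r < q" "x \<in> {..<m}" for r x
      using that digits_less[of x m r q] by (simp add: scale_low_def scale_mod_def)
    show "scale_low m q c y = y" if "y \<notin> (\<lambda>(r, x). x + m * r) ` ({..<q} \<times> {..<m})" for y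
      using that digits_cover[of y m q] by (force simp: scale_low_def)
  qed (use scale_mod_permutes[OF assms] in auto)
  then show ?thesis by simp
qed

text \<open>For a fixed low digit, \<open>scale_high\<close> acts on the high digit by an affine map modulo the odd
  number \<open>q\<close>, whose sign is that of its linear part.\<close>
lemma sign_scale_high:
  assumes q: "odd q" and c: "coprime c q"
  shows "permutation (scale_high m q c) \<and> sign (scale_high m q c) = sign (scale_mod q c) ^ m"
proof -
  have "permutation (scale_mod q c)"
    by (rule permutes_imp_permutation[OF _ scale_mod_permutes[OF c]]) simp
  then have affine: "sign (shift_mod q d \<circ> scale_mod q c) = sign (scale_mod q c)" for d
    by (simp add: sign_compose[OF permutation_shift_mod] sign_shift_mod_odd[OF q])
  have "permutation (scale_high m q c) \<and>
      sign (scale_high m q c) = (\<Prod>i<m. sign (shift_mod q (c * i div m) \<circ> scale_mod q c))"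
  proof (rule sign_blockwise[where e = "\<lambda>i r. i + m * r"
        and p = "\<lambda>i. shift_mod q (c * i div m) \<circ> scale_mod q c"])
    show "inj_on (\<lambda>(i, r). i + m * r) ({..<m} \<times> {..<q})"
      by (auto simp: inj_on_def digits_eq_iff)
    show "scale_high m q c (i + m * r) = i + m * (shift_mod q (c * i div m) \<circ> scale_mod q c) r"
      if "i < m" "r \<in> {..<q}" for i r
      using that digits_less[of i m r q]
      by (simp add: scale_high_def shift_mod_def scale_mod_def mod_add_left_eq)
    show "scale_high m q c y = y" if "y \<notin> (\<lambda>(i, r). i + m * r) ` ({..<m} \<times> {..<q})" for y
      using that digits_cover[of y m q] by (force simp: scale_high_def)
  qed (use scale_mod_permutes[OF c] shift_mod_permutes in \<open>auto intro: permutes_compose\<close>)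
  then show ?thesis by (simp add: affine)
qed

lemma sign_scale_mod_mult_modulus:
  assumes "odd q" "coprime c (m * q)"
  shows "sign (scale_mod (m * q) c) = sign (scale_mod m c) ^ q * sign (scale_mod q c) ^ m"
  using sign_scale_low[of c m q] sign_scale_high[of q c m] assms
  by (simp add: scale_mod_mult_modulus sign_compose)

lemma Jacobi_eq_prod_mset: "Jacobi a n = (\<Prod>p\<in>#prime_factorization n. Legendre a (int p))"
  unfolding Jacobi_def image_prod_mset_multiplicity
  by (intro prod.cong refl) (simp add: count_prime_factorization_prime in_prime_factors_imp_prime)

lemma Jacobi_prime_mult:
  assumes "prime p" "m > 0"
  shows "Jacobi a (p * m) = Legendre a (int p) * Jacobi a m"
  using assms by (simp add: Jacobi_eq_prod_mset prime_factorization_times_prime)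

lemma Jacobi_cong:
  assumes "[x = y] (mod int n)"
  shows "Jacobi x n = Jacobi y n"
  unfolding Jacobi_def
proof (rule prod.cong[OF refl])
  fix p assume "p \<in> prime_factors n"
  then have "[x = y] (mod int p)" using assms cong_dvd_modulus by fastforce
  then show "Legendre x (int p) ^ multiplicity p n = Legendre y (int p) ^ multiplicity p n"
    by (simp add: Legendre_cong)
qed

lemma Jacobi_eq_0:
  assumes "prime p" "p dvd n" "n > 0" "int p dvd x"
  shows "Jacobi x n = 0"
proof -
  have "p \<in># prime_factorization n" using assms by (auto simp: in_prime_factors_iff)
  moreover have "Legendre x (int p) = 0" using assms(4) by (simp add: Legendre_def cong_0_iff)
  ultimately show ?thesis unfolding Jacobi_eq_prod_mset by auto
qed

theorem sign_scale_mod_eq_Jacobi: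
  assumes "odd n" "coprime c n"
  shows "sign (scale_mod n c) = Jacobi (int c) n"
  using assms
proof (induction n rule: less_induct)
  case (less n)
  show ?case
  proof (cases "n = 1")
    case True
    then have "scale_mod n c = id" by (auto simp: scale_mod_def fun_eq_iff)
    then show ?thesis using True by (simp add: Jacobi_def)
  next
    case False
    then obtain p m where p: "prime p" and n: "n = p * m"
      using prime_factor_nat by (metis dvdE)
    have "m > 0" "odd m" "odd p" "coprime c m" "coprime c p"
      using less.prems n by (auto intro: odd_pos)
    moreover have "m < n" using n \<open>m > 0\<close> prime_gt_1_nat[OF p] by simp
    moreover have "sign f ^ k = sign f" if "odd k" for f :: "nat \<Rightarrow> nat" and k :: nat
      using that by (simp add: sign_def)
    ultimately have "sign (scale_mod n c) = sign (scale_mod m c) * sign (scale_mod p c)"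
      using sign_scale_mod_mult_modulus[of p c m] less.prems n by (simp add: mult.commute)
    also have "\<dots> = Jacobi (int c) m * Legendre (int c) (int p)"
      using less.IH \<open>m < n\<close> \<open>odd m\<close> \<open>coprime c m\<close> sign_scale_mod_prime[OF p] \<open>odd p\<close> \<open>coprime c p\<close>
      by simp
    finally show ?thesis using Jacobi_prime_mult[OF p \<open>m > 0\<close>] n by simp
  qed
qed

section \<open>Determinants\<close>

lemma prod_mat_permutes:
  assumes "p permutes {0..<n}"
  shows "(\<Prod>i = 0..<n. mat n n f $$ (i, p i)) = (\<Prod>i = 0..<n. f (i, p i))"
proof (rule prod.cong[OF refl])
  fix i assume "i \<in> {0..<n}"
  moreover hence "p i \<in> {0..<n}" using permutes_in_image[OF assms] by auto
  ultimately show "mat n n f $$ (i, p i) = f (i, p i)" by simp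
qed

lemma det_mat_scale:
  fixes h :: "nat \<Rightarrow> nat \<Rightarrow> 'a :: comm_ring_1"
  shows "det (mat n n (\<lambda>(i,j). r i * h i j * s j)) =
    (\<Prod>i<n. r i) * (\<Prod>j<n. s j) * det (mat n n (\<lambda>(i,j). h i j))"
proof -
  have *: "of_int (sign p) * (\<Prod>i = 0..<n. mat n n (\<lambda>(i,j). r i * h i j * s j) $$ (i, p i)) =
      (\<Prod>i<n. r i) * (\<Prod>j<n. s j) * (of_int (sign p) * (\<Prod>i = 0..<n. mat n n (\<lambda>(i,j). h i j) $$ (i, p i)))"
    if p: "p \<in> {p. p permutes {0..<n}}" for p
  proof -
    have p: "p permutes {0..<n}" using p by simp
    have "(\<Prod>i = 0..<n. s (p i)) = (\<Prod>j = 0..<n. s j)"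
      using prod.permute[OF p, of s] by (simp add: comp_def)
    thus ?thesis unfolding prod_mat_permutes[OF p] by (simp add: prod.distrib atLeast0LessThan mult_ac)
  qed
  show ?thesis
    unfolding det_def'[OF mat_carrier] sum_distrib_left by (rule sum.cong[OF refl *])
qed

lemma det_mat_permute_rows_cols:
  fixes g :: "nat \<Rightarrow> nat \<Rightarrow> 'a :: comm_ring_1"
  assumes s: "\<sigma> permutes {0..<n}" and t: "\<tau> permutes {0..<n}"
  shows "det (mat n n (\<lambda>(j,k). g (\<sigma> j) (\<tau> k))) = of_int (sign \<sigma> * sign \<tau>) * det (mat n n (\<lambda>(u,v). g u v))"
proof -
  have sl: "\<sigma> j < n" if "j < n" for j using permutes_in_image[OF s] that by auto
  have tl: "\<tau> j < n" if "j < n" for j using permutes_in_image[OF t] that by auto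
  define A where "A = mat n n (\<lambda>(u,k). g u (\<tau> k))"
  have "mat n n (\<lambda>(j,k). g (\<sigma> j) (\<tau> k)) = mat n n (\<lambda>(j,k). A $$ (\<sigma> j, k))"
    by (rule eq_matI) (auto simp: A_def sl)
  hence 1: "det (mat n n (\<lambda>(j,k). g (\<sigma> j) (\<tau> k))) = signof \<sigma> * det A"
    using det_permute_rows[OF _ s, of A] by (simp add: A_def)
  define B where "B = mat n n (\<lambda>(v,u). g u v)"
  have "transpose_mat A = mat n n (\<lambda>(k,u). B $$ (\<tau> k, u))"
    by (rule eq_matI) (auto simp: A_def B_def tl)
  hence "det (transpose_mat A) = signof \<tau> * det B"
    using det_permute_rows[OF _ t, of B] by (simp add: B_def)
  moreover have "det (transpose_mat A) = det A" by (rule det_transpose[of A n]) (simp add: A_def)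
  ultimately have 2: "det A = signof \<tau> * det B" by simp
  have "transpose_mat B = mat n n (\<lambda>(u,v). g u v)" by (rule eq_matI) (auto simp: B_def)
  hence 3: "det B = det (mat n n (\<lambda>(u,v). g u v))"
    using det_transpose[of B n] by (simp add: B_def)
  show ?thesis using 1 2 3 by simp
qed

lemma det_mat_transpose:
  fixes f :: "nat \<Rightarrow> nat \<Rightarrow> 'a :: comm_ring_1"
  shows "det (mat n n (\<lambda>(j, k). f k j)) = det (mat n n (\<lambda>(j, k). f j k))"
proof -
  have "mat n n (\<lambda>(j, k). f k j) = transpose_mat (mat n n (\<lambda>(j, k). f j k))"
    by (rule eq_matI) auto
  then show ?thesis by (simp add: det_transpose[OF mat_carrier])
qed

lemma det_first_column_zero:
  fixes A :: "'a :: comm_ring_1 mat"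
  assumes A: "A \<in> carrier_mat (Suc n) (Suc n)" and z: "\<And>i. 0 < i \<Longrightarrow> i < Suc n \<Longrightarrow> A $$ (i, 0) = 0"
  shows "det A = A $$ (0, 0) * det (mat n n (\<lambda>(i,j). A $$ (Suc i, Suc j)))"
proof -
  have "det A = (\<Sum>i<Suc n. A $$ (i,0) * cofactor A i 0)" by (rule laplace_expansion_column[OF A]) simp
  also have "\<dots> = A $$ (0,0) * cofactor A 0 0"
    by (subst sum.remove[of _ 0]) (use z in auto)
  also have "mat_delete A 0 0 = mat n n (\<lambda>(i,j). A $$ (Suc i, Suc j))"
    using A by (intro eq_matI) (auto simp: mat_delete_def)
  hence "cofactor A 0 0 = det (mat n n (\<lambda>(i,j). A $$ (Suc i, Suc j)))" by (simp add: cofactor_def)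
  finally show ?thesis .
qed

definition unit_lower_col0 :: "nat \<Rightarrow> (nat \<Rightarrow> 'a :: comm_ring_1) \<Rightarrow> 'a mat" where
  "unit_lower_col0 n f = mat (Suc n) (Suc n) (\<lambda>(i, j). if i = j then 1 else if j = 0 then f i else 0)"

lemma unit_lower_col0_carrier: "unit_lower_col0 n f \<in> carrier_mat (Suc n) (Suc n)"
  by (simp add: unit_lower_col0_def)

lemma det_unit_lower_col0: "det (unit_lower_col0 n f) = 1"
proof -
  have "det (unit_lower_col0 n f) = prod_list (diag_mat (unit_lower_col0 n f))"
    by (rule det_lower_triangular[of "Suc n"]) (auto simp: unit_lower_col0_def)
  also have "\<dots> = 1" by (simp add: prod_list_diag_prod unit_lower_col0_def)
  finally show ?thesis .
qed

lemma unit_lower_col0_mult_index: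
  assumes B: "B \<in> carrier_mat (Suc n) (Suc n)" and ij: "i < Suc n" "j < Suc n"
  shows "(unit_lower_col0 n f * B) $$ (i, j) = B $$ (i, j) + (if i = 0 then 0 else f i * B $$ (0, j))"
proof -
  have "(unit_lower_col0 n f * B) $$ (i, j) = (\<Sum>w<Suc n. unit_lower_col0 n f $$ (i, w) * B $$ (w, j))"
    using B ij by (simp add: unit_lower_col0_def scalar_prod_def atLeast0LessThan)
  also have "\<dots> = (\<Sum>w<Suc n. (if w = i then B $$ (i, j) else 0)
      + (if w = 0 \<and> i \<noteq> 0 then f i * B $$ (0, j) else 0))"
    using ij by (intro sum.cong) (auto simp: unit_lower_col0_def)
  also have "\<dots> = B $$ (i, j) + (if i = 0 then 0 else f i * B $$ (0, j))"
    using ij by (simp add: sum.distrib)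
  finally show ?thesis .
qed

lemma mult_unit_lower_col0_index:
  assumes B: "B \<in> carrier_mat (Suc n) (Suc n)" and ij: "i < Suc n" "j < Suc n"
  shows "(B * unit_lower_col0 n f) $$ (i, j)
    = B $$ (i, j) + (if j = 0 then (\<Sum>v<n. B $$ (i, Suc v) * f (Suc v)) else 0)"
proof -
  have "(B * unit_lower_col0 n f) $$ (i, j) = (\<Sum>w<Suc n. B $$ (i, w) * unit_lower_col0 n f $$ (w, j))"
    using B ij by (simp add: unit_lower_col0_def scalar_prod_def atLeast0LessThan)
  also have "\<dots> = B $$ (i, j) + (if j = 0 then (\<Sum>v<n. B $$ (i, Suc v) * f (Suc v)) else 0)"
  proof (cases "j = 0")
    case True
    have "(\<Sum>v<n. B $$ (i, Suc v) * unit_lower_col0 n f $$ (Suc v, j)) = (\<Sum>v<n. B $$ (i, Suc v) * f (Suc v))"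
      using True by (intro sum.cong) (auto simp: unit_lower_col0_def)
    then show ?thesis using True by (simp add: sum.lessThan_Suc_shift unit_lower_col0_def del: sum.lessThan_Suc)
  next
    case False
    have "(\<Sum>w<Suc n. B $$ (i, w) * unit_lower_col0 n f $$ (w, j)) = (\<Sum>w<Suc n. if w = j then B $$ (i, j) else 0)"
      using ij False by (intro sum.cong) (auto simp: unit_lower_col0_def)
    then show ?thesis using ij False by simp
  qed
  finally show ?thesis .
qed

text \<open>The matrix determinant lemma, proved by eliminating the first row and column of the bordered
  matrix \<open>[[1, Q], [P, K]]\<close> in two ways.\<close>
lemma det_minus_rank_one:
  fixes K :: "nat \<Rightarrow> nat \<Rightarrow> 'a :: comm_ring_1"
  assumes KY: "\<And>u. u < n \<Longrightarrow> (\<Sum>v<n. K u v * Y v) = P u"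
  shows "det (mat n n (\<lambda>(u, v). K u v - P u * Q v)) = det (mat n n (\<lambda>(u, v). K u v)) * (1 - (\<Sum>v<n. Q v * Y v))"
proof -
  define M where "M = mat (Suc n) (Suc n) (\<lambda>(i, j). if i = 0 then (if j = 0 then 1 else Q (j - 1))
      else (if j = 0 then P (i - 1) else K (i - 1) (j - 1)))"
  define L where "L = unit_lower_col0 n (\<lambda>i. - P (i - 1))"
  define C where "C = unit_lower_col0 n (\<lambda>i. - Y (i - 1))"
  have M: "M \<in> carrier_mat (Suc n) (Suc n)" by (simp add: M_def)
  have LM: "(L * M) $$ (i, j) = (if i = 0 then M $$ (0, j) else if j = 0 then 0
      else K (i - 1) (j - 1) - P (i - 1) * Q (j - 1))" if "i < Suc n" "j < Suc n" for i j
    using that unfolding L_def unit_lower_col0_mult_index[OF M that] by (auto simp: M_def)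
  have MC: "(M * C) $$ (i, j) = (if j = 0 then (if i = 0 then 1 - (\<Sum>v<n. Q v * Y v) else 0) else M $$ (i, j))"
    if "i < Suc n" "j < Suc n" for i j
    using that KY[of "i - 1"] unfolding C_def mult_unit_lower_col0_index[OF M that]
    by (auto simp: M_def sum_negf)
  have L: "L \<in> carrier_mat (Suc n) (Suc n)" and C: "C \<in> carrier_mat (Suc n) (Suc n)"
    by (simp_all add: L_def C_def unit_lower_col0_carrier)
  have "det (L * M) = (L * M) $$ (0, 0) * det (mat n n (\<lambda>(i, j). (L * M) $$ (Suc i, Suc j)))"
    by (rule det_first_column_zero) (use L M LM in auto)
  also have "mat n n (\<lambda>(i, j). (L * M) $$ (Suc i, Suc j)) = mat n n (\<lambda>(u, v). K u v - P u * Q v)"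
    by (rule eq_matI) (auto simp: LM)
  also have "(L * M) $$ (0, 0) = 1" using LM[of 0 0] by (simp add: M_def)
  moreover have "det (M * C) = (M * C) $$ (0, 0) * det (mat n n (\<lambda>(i, j). (M * C) $$ (Suc i, Suc j)))"
    by (rule det_first_column_zero) (use C M MC in auto)
  moreover have "mat n n (\<lambda>(i, j). (M * C) $$ (Suc i, Suc j)) = mat n n (\<lambda>(u, v). K u v)"
    using MC by (intro eq_matI) (auto, simp add: M_def)
  moreover have "(M * C) $$ (0, 0) = 1 - (\<Sum>v<n. Q v * Y v)" by (simp add: MC)
  moreover have "det (L * M) = det M" "det (M * C) = det M"
    using det_mult[OF L M] det_mult[OF M C] by (simp_all add: L_def C_def det_unit_lower_col0)
  ultimately show ?thesis by (simp add: mult.commute)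
qed

lemma det_ones_below_const_above:
  fixes s :: "'a :: comm_ring_1"
  assumes n: "n > 0"
  shows "det (mat n n (\<lambda>(u,v). if u < v then s else 1)) = (1 - s) ^ (n - 1)"
proof -
  define Lo where "Lo = mat n n (\<lambda>(u,v). if v \<le> u then 1 else (0::'a))"
  define U where "U = mat n n (\<lambda>(u,v). if u = 0 then (if v = 0 then 1 else s) else if u = v then 1 - s else 0)"
  have Lo: "Lo \<in> carrier_mat n n" and U: "U \<in> carrier_mat n n" by (auto simp: Lo_def U_def)
  have "mat n n (\<lambda>(u,v). if u < v then s else 1) = Lo * U"
  proof (rule eq_matI)
    fix u v assume uv: "u < dim_row (Lo * U)" "v < dim_col (Lo * U)"
    hence u: "u < n" and v: "v < n" using Lo U by auto
    have "(Lo * U) $$ (u, v) = (\<Sum>w<n. Lo $$ (u, w) * U $$ (w, v))"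
      using u v Lo U by (simp add: scalar_prod_def atLeast0LessThan)
    also have "\<dots> = (\<Sum>w<n. (if w = 0 then U $$ (0, v) else 0) + (if w = v \<and> 0 < w \<and> w \<le> u then 1 - s else 0))"
      using u v by (intro sum.cong) (auto simp: Lo_def U_def)
    also have "\<dots> = (\<Sum>w<n. (if w = 0 then U $$ (0, v) else 0)) + (\<Sum>w<n. (if w = v then (if 0 < v \<and> v \<le> u then 1 - s else 0) else 0))"
      by (subst sum.distrib) (intro arg_cong2[where f = "(+)"] sum.cong, auto)
    also have "\<dots> = U $$ (0, v) + (if 0 < v \<and> v \<le> u then 1 - s else 0)"
      using u v n by (simp add: sum.delta)
    also have "\<dots> = (if u < v then s else 1)" using u v n by (auto simp: U_def)
    finally show "mat n n (\<lambda>(u,v). if u < v then s else 1) $$ (u, v) = (Lo * U) $$ (u, v)"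
      using u v by simp
  qed (auto simp: Lo_def U_def)
  hence "det (mat n n (\<lambda>(u,v). if u < v then s else 1)) = det Lo * det U" using det_mult[OF Lo U] by simp
  moreover have "det Lo = 1"
  proof -
    have "det Lo = prod_list (diag_mat Lo)" by (rule det_lower_triangular[of n]) (auto simp: Lo_def)
    thus ?thesis by (simp add: prod_list_diag_prod Lo_def)
  qed
  moreover have "det U = (1 - s) ^ (n - 1)"
  proof -
    have "det U = prod_list (diag_mat U)" by (rule det_upper_triangular) (auto simp: U_def upper_triangular_def)
    also have "\<dots> = (\<Prod>i = 0..<n. U $$ (i, i))" by (simp add: prod_list_diag_prod U_def)
    also have "\<dots> = (\<Prod>i = 0..<n. if i = 0 then 1 else 1 - s)" by (intro prod.cong) (auto simp: U_def)
    also have "\<dots> = (1 - s) ^ (n - 1)"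
    proof -
      have "{0..<n} = insert 0 {1..<n}" using n by auto
      hence "(\<Prod>i = 0..<n. if i = 0 then 1 else 1 - s) = (\<Prod>i = 1..<n. if i = 0 then 1 else 1 - s)" by simp
      also have "\<dots> = (\<Prod>i = 1..<n. 1 - s)" by (intro prod.cong) auto
      finally show ?thesis by simp
    qed
    finally show ?thesis .
  qed
  ultimately show ?thesis by simp
qed

definition pred_mod :: "nat \<Rightarrow> nat \<Rightarrow> nat" where
  "pred_mod n v = (v + n - 1) mod n"

lemma pred_mod_pos:
  assumes "0 < v" "v < n"
  shows "pred_mod n v = v - 1"
proof -
  have "v + n - 1 = (v - 1) + n" using assms by simp
  then have "pred_mod n v = (v - 1) mod n" by (simp add: pred_mod_def)
  then show ?thesis using assms by simp
qed

lemma pred_mod_less_iff: "v < n \<Longrightarrow> pred_mod n v < v \<longleftrightarrow> v \<noteq> 0"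
  by (cases "v = 0") (simp_all add: pred_mod_pos)

lemma sum_pred_mod: "(\<Sum>v<n. f (pred_mod n v)) = (\<Sum>v<n. f v)"
proof (cases "n = 0")
  case False
  have "(\<Sum>v<n. f v) = (\<Sum>v<n. (f \<circ> shift_mod n (n - 1)) v)"
    by (rule sum.permute[OF shift_mod_permutes])
  also have "\<dots> = (\<Sum>v<n. f (pred_mod n v))"
    using False by (intro sum.cong) (auto simp: shift_mod_def pred_mod_def)
  finally show ?thesis by simp
qed simp

definition stair_solution :: "nat \<Rightarrow> 'a :: field \<Rightarrow> (nat \<Rightarrow> 'a) \<Rightarrow> nat \<Rightarrow> 'a" where
  "stair_solution n s P v = (P (pred_mod n v) - P v) / (s - 1) + (if v = 0 then P (n - 1) else 0)"

lemma stair_solution_solves: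
  fixes s :: "'a :: field"
  assumes s: "s \<noteq> 1" and u: "u < n"
  shows "(\<Sum>v<n. (if u < v then s else 1) * stair_solution n s P v) = P u"
proof -
  define Y where "Y = stair_solution n s P"
  have s1: "s - 1 \<noteq> 0" using s by simp
  obtain m where m: "n = Suc m" using u by (cases n) auto
  have sum_Y: "(\<Sum>v<n. Y v) = P (n - 1)"
  proof -
    have "(\<Sum>v<n. Y v) = ((\<Sum>v<n. P (pred_mod n v)) - (\<Sum>v<n. P v)) / (s - 1) + P (n - 1)"
      using u by (simp add: Y_def stair_solution_def sum.distrib sum_subtractf flip: sum_divide_distrib)
    then show ?thesis by (simp add: sum_pred_mod)
  qed
  have sum_Y_above: "(\<Sum>v\<in>{u<..<n}. Y v) = (P u - P (n - 1)) / (s - 1)"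
  proof -
    have "(\<Sum>v\<in>{u<..<n}. Y v) = (\<Sum>v\<in>{Suc u..<Suc m}. (P (v - 1) - P v) / (s - 1))"
      using m by (intro sum.cong) (auto simp: Y_def stair_solution_def pred_mod_pos)
    also have "\<dots> = - (\<Sum>i\<in>{u..<m}. P (Suc i) - P i) / (s - 1)"
      by (subst sum.shift_bounds_Suc_ivl) (simp add: sum_negf[symmetric] flip: sum_divide_distrib)
    also have "(\<Sum>i\<in>{u..<m}. P (Suc i) - P i) = P m - P u"
      using u m by (intro sum_Suc_diff') simp
    finally show ?thesis using m by (simp add: field_simps)
  qed
  have "(\<Sum>v<n. (if u < v then s else 1) * Y v) = (\<Sum>v<n. Y v) + (\<Sum>v<n. if u < v then (s - 1) * Y v else 0)"
    by (subst sum.distrib[symmetric]) (intro sum.cong, auto simp: algebra_simps)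
  also have "(\<Sum>v<n. if u < v then (s - 1) * Y v else 0) = (\<Sum>v\<in>{v \<in> {..<n}. u < v}. (s - 1) * Y v)"
    by (rule sum.inter_filter[symmetric]) simp
  also have "{v \<in> {..<n}. u < v} = {u<..<n}" by auto
  also have "(\<Sum>v\<in>{u<..<n}. (s - 1) * Y v) = (s - 1) * (\<Sum>v\<in>{u<..<n}. Y v)"
    by (rule sum_distrib_left[symmetric])
  finally show ?thesis using s1 sum_Y sum_Y_above by (simp add: Y_def)
qed

lemma sum_mult_stair_solution:
  assumes "n > 0"
  shows "(\<Sum>v<n. Q v * stair_solution n s P v)
    = ((\<Sum>v<n. Q v * P (pred_mod n v)) - (\<Sum>v<n. Q v * P v)) / (s - 1) + Q 0 * P (n - 1)"
proof -
  have "(\<Sum>v<n. Q v * (if v = 0 then P (n - 1) else 0)) = (\<Sum>v<n. if v = 0 then Q 0 * P (n - 1) else 0)"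
    by (rule sum.cong) auto
  then show ?thesis
    using assms by (simp add: stair_solution_def algebra_simps sum.distrib sum_subtractf
        flip: sum_divide_distrib)
qed

lemma det_stair_minus_rank_one:
  fixes s :: "'a :: field"
  assumes "n > 0" "s \<noteq> 1"
  shows "det (mat n n (\<lambda>(u, v). (if u < v then s else 1) - P u * Q v))
    = (1 - s) ^ (n - 1) * (1 - (\<Sum>v<n. Q v * stair_solution n s P v))"
proof -
  have "det (mat n n (\<lambda>(u, v). (if u < v then s else 1) - P u * Q v))
      = det (mat n n (\<lambda>(u, v). if u < v then s else 1)) * (1 - (\<Sum>v<n. Q v * stair_solution n s P v))"
    by (rule det_minus_rank_one) (rule stair_solution_solves[OF assms(2)])
  then show ?thesis by (simp only: det_ones_below_const_above[OF assms(1)])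
qed

lemma powi_diff_minus_one:
  fixes t :: "'a :: field"
  assumes "t \<noteq> 0"
  shows "t powi (x - y - d) - 1 = t powi x * (t powi (- d) - t powi (- x) * t powi y) * t powi (- y)"
proof -
  have "t powi (x - y - d) = t powi (x + - d + - y)" by (simp add: algebra_simps)
  also have "\<dots> = t powi x * t powi (- d) * t powi (- y)"
    by (simp only: power_int_add[OF disjI1[OF assms]])
  finally show ?thesis using assms by (simp add: power_int_minus field_simps)
qed

lemma prod_power_int:
  fixes x :: "'a :: field" and m :: nat
  assumes "x \<noteq> 0"
  shows "(\<Prod>i<m. x powi f i) = x powi (\<Sum>i<m. f i)"
  by (induction m) (simp_all add: assms power_int_add)

lemma det_powi_minus_one_quasiperiodic:
  fixes t :: "'a :: field"
  assumes t: "t \<noteq> 0" and h: "0 < h" "2 * h < n"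
    and F: "\<And>j k. j < n \<Longrightarrow> k + h < n \<Longrightarrow> F j (k + h) = F j k + c"
  shows "det (mat n n (\<lambda>(j, k). t powi F j k - 1)) = 0"
proof -
  define A where "A = mat n n (\<lambda>(j, k). t powi F j k - 1)"
  define l where "l = t powi c"
  define \<delta> where "\<delta> i k = (if k = i then 1 else 0 :: 'a)" for i k :: nat
  define v where "v = vec n (\<lambda>k. l * \<delta> 0 k - (l + 1) * \<delta> h k + \<delta> (2 * h) k)"
  have A: "A \<in> carrier_mat n n" by (simp add: A_def)
  have "v $ (2 * h) = 1" using h by (simp add: v_def \<delta>_def)
  then have "v \<noteq> 0\<^sub>v n" using h by auto
  moreover have "A *\<^sub>v v = 0\<^sub>v n"
  proof (rule eq_vecI)
    fix j assume "j < dim_vec (0\<^sub>v n :: 'a vec)"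
    then have j: "j < n" by simp
    define S where "S i = (\<Sum>k<n. A $$ (j, k) * \<delta> i k)" for i
    have Fh: "F j h = F j 0 + c" using F[of j 0] j h by simp
    have "F j (h + h) = F j h + c" using F[of j h] j h by simp
    then have F2h: "F j (2 * h) = F j 0 + c + c" using Fh by (metis mult_2)
    have powers: "t powi F j h = t powi F j 0 * l" "t powi F j (2 * h) = t powi F j 0 * l * l"
      by (simp_all only: Fh F2h l_def power_int_add[OF disjI1[OF t]])
    have S: "S i = A $$ (j, i)" if "i < n" for i
    proof -
      have "S i = (\<Sum>k<n. if k = i then A $$ (j, k) else 0)"
        unfolding S_def by (intro sum.cong) (simp_all add: \<delta>_def)
      then show ?thesis using that by simp
    qed
    have "(A *\<^sub>v v) $ j = (\<Sum>k<n. l * (A $$ (j, k) * \<delta> 0 k) - (l + 1) * (A $$ (j, k) * \<delta> h k)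
        + A $$ (j, k) * \<delta> (2 * h) k)"
      using j by (auto simp: A_def v_def mult_mat_vec_def scalar_prod_def atLeast0LessThan algebra_simps
          intro!: sum.cong)
    also have "\<dots> = l * S 0 - (l + 1) * S h + S (2 * h)"
      by (simp add: S_def sum.distrib sum_subtractf sum_distrib_left)
    also have "\<dots> = l * (t powi F j 0 - 1) - (l + 1) * (t powi F j 0 * l - 1) + (t powi F j 0 * l * l - 1)"
      using j h by (simp add: S A_def powers)
    also have "\<dots> = 0" by (simp add: algebra_simps)
    finally show "(A *\<^sub>v v) $ j = 0\<^sub>v n $ j" using j by simp
  qed (simp add: A_def)
  moreover have "v \<in> carrier_vec n" by (simp add: v_def)
  ultimately have "det A = 0" unfolding det_0_iff_vec_prod_zero[OF A] by (intro exI[of _ v]) simp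
  then show ?thesis by (simp add: A_def)
qed

lemma tendsto_det:
  fixes f :: "real \<Rightarrow> nat \<Rightarrow> nat \<Rightarrow> real"
  assumes "\<And>i j. i < n \<Longrightarrow> j < n \<Longrightarrow> ((\<lambda>t. f t i j) \<longlongrightarrow> L i j) F"
  shows "((\<lambda>t. det (mat n n (\<lambda>(i,j). f t i j))) \<longlongrightarrow> det (mat n n (\<lambda>(i,j). L i j))) F"
proof -
  have eq: "det (mat n n (\<lambda>(i,j). g i j)) = (\<Sum>p\<in>{p. p permutes {0..<n}}. of_int (sign p) * (\<Prod>i = 0..<n. g i (p i)))"
    for g :: "nat \<Rightarrow> nat \<Rightarrow> real"
    unfolding det_def'[OF mat_carrier] by (intro sum.cong refl) (simp add: prod_mat_permutes)
  show ?thesis unfolding eq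
  proof (intro tendsto_sum tendsto_mult tendsto_const tendsto_prod)
    fix p i assume "p \<in> {p. p permutes {0..<n}}" "i \<in> {0..<n}"
    moreover hence "p i \<in> {0..<n}" using permutes_in_image by fastforce
    ultimately show "((\<lambda>t. f t i (p i)) \<longlongrightarrow> L i (p i)) F" using assms by auto
  qed
qed

section \<open>The floor matrix\<close>

text \<open>Indices start at \<open>0\<close>: entry \<open>(j, k)\<close> is entry \<open>(j + 1, k + 1)\<close> of the paper.\<close>
definition lin_form :: "int \<Rightarrow> nat \<Rightarrow> nat \<Rightarrow> int" where
  "lin_form a j k = a * int (Suc j) - (a + 1) * int (Suc k)"

lemma lin_form_shift_row: "lin_form a (j + h) k = lin_form a j k + a * int h"
  and lin_form_shift_col: "lin_form a j (k + h) = lin_form a j k - (a + 1) * int h"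
  by (simp_all add: lin_form_def algebra_simps)

lemma div_add_mult_self: "n > 0 \<Longrightarrow> (x + c * int n) div int n = x div int n + c"
  by simp

lemma mod_add_mod_minus_1: "((y::int) mod m + m - 1) mod m = (y - 1) mod m"
proof -
  have "(y mod m + (m - 1)) mod m = (y + (m - 1)) mod m" by (rule mod_add_left_eq)
  also have "y + (m - 1) = (y - 1) + m" by simp
  also have "((y - 1) + m) mod m = (y - 1) mod m" by simp
  finally show ?thesis by (simp add: add_diff_eq)
qed

lemma double_sum_Suc_int: "2 * (\<Sum>j<n. int (Suc j)) = int n * (int n + 1)"
  by (induction n) (auto simp: algebra_simps)

locale floor_matrix_coprime =
  fixes a :: int and n :: nat
  assumes odd_n: "odd n" and coprime_a: "coprime a (int n)" and coprime_a1: "coprime (a + 1) (int n)"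
begin

abbreviation X :: "nat \<Rightarrow> nat \<Rightarrow> int" where "X \<equiv> lin_form a"

text \<open>\<open>\<sigma> j = a (j + 1) mod n\<close> (lemma \<open>\<sigma>_eq\<close>), written as a composite to expose its sign.\<close>
definition "\<sigma> = scale_mod n (nat (a mod int n)) \<circ> shift_mod n 1"

definition "\<tau> = scale_mod n (nat ((a + 1) mod int n)) \<circ> shift_mod n 1"

definition "\<alpha> j = (a * int (Suc j)) div int n"

definition "\<beta> k = ((a + 1) * int (Suc k)) div int n"

lemma n_pos: "n > 0" using odd_n by (rule odd_pos)

lemma int_nat_mod: "int (nat (x mod int n)) = x mod int n"
  using n_pos by simp

lemma coprime_nat_mod:
  assumes "coprime x (int n)"
  shows "coprime (nat (x mod int n)) n"
proof -
  have "coprime (int (nat (x mod int n))) (int n)"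
    unfolding int_nat_mod using assms n_pos by simp
  then show ?thesis using coprime_int_iff by blast
qed

lemma \<sigma>_permutes: "\<sigma> permutes {..<n}"
  unfolding \<sigma>_def
  by (intro permutes_compose[OF shift_mod_permutes scale_mod_permutes] coprime_nat_mod coprime_a)

lemma \<tau>_permutes: "\<tau> permutes {..<n}"
  unfolding \<tau>_def
  by (intro permutes_compose[OF shift_mod_permutes scale_mod_permutes] coprime_nat_mod coprime_a1)

lemma sign_\<sigma>_\<tau>: "sign \<sigma> * sign \<tau> = Jacobi (a * (a + 1)) n"
proof -
  define c d where "c = nat (a mod int n)" and "d = nat ((a + 1) mod int n)"
  have cd: "coprime c n" "coprime d n"
    unfolding c_def d_def using coprime_a coprime_a1 by (simp_all add: coprime_nat_mod)
  have perm: "permutation (scale_mod n c)" "permutation (scale_mod n d)"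
    using permutes_imp_permutation[OF finite_lessThan scale_mod_permutes] cd by blast+
  have "sign \<sigma> = sign (scale_mod n c)" "sign \<tau> = sign (scale_mod n d)"
    unfolding \<sigma>_def \<tau>_def c_def[symmetric] d_def[symmetric]
    by (simp_all only: sign_compose[OF _ permutation_shift_mod] perm sign_shift_mod_odd[OF odd_n] mult_1_right)
  then have "sign \<sigma> * sign \<tau> = sign (scale_mod n (c * d))"
    by (simp add: scale_mod_mult sign_compose perm)
  also have "\<dots> = Jacobi (int (c * d)) n"
    using cd odd_n by (intro sign_scale_mod_eq_Jacobi) auto
  also have "\<dots> = Jacobi (a * (a + 1)) n"
  proof (rule Jacobi_cong)
    have "int (c * d) = (a mod int n) * ((a + 1) mod int n)"
      by (simp only: c_def d_def of_nat_mult int_nat_mod)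
    then show "[int (c * d) = a * (a + 1)] (mod int n)" by (simp add: cong_def mod_mult_eq)
  qed
  finally show ?thesis .
qed

lemma \<sigma>_eq: "j < n \<Longrightarrow> int (\<sigma> j) = (a * int (Suc j)) mod int n"
  using n_pos by (simp add: \<sigma>_def shift_mod_def scale_mod_def zmod_int int_nat_mod mod_mult_eq)

lemma \<tau>_eq: "k < n \<Longrightarrow> int (\<tau> k) = ((a + 1) * int (Suc k)) mod int n"
  using n_pos by (simp add: \<tau>_def shift_mod_def scale_mod_def zmod_int int_nat_mod mod_mult_eq)

lemma \<sigma>_less: "j < n \<Longrightarrow> \<sigma> j < n"
  using permutes_in_image[OF \<sigma>_permutes] by auto

lemma \<tau>_less: "k < n \<Longrightarrow> \<tau> k < n"
  using permutes_in_image[OF \<tau>_permutes] by auto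

lemma a_decomp: "j < n \<Longrightarrow> a * int (Suc j) = int n * \<alpha> j + int (\<sigma> j)"
  by (simp add: \<sigma>_eq \<alpha>_def)

lemma a1_decomp: "k < n \<Longrightarrow> (a + 1) * int (Suc k) = int n * \<beta> k + int (\<tau> k)"
  by (simp add: \<tau>_eq \<beta>_def)

lemma lin_form_div:
  assumes j: "j < n" and k: "k < n"
  shows "X j k div int n = \<alpha> j - \<beta> k - (if \<sigma> j < \<tau> k then 1 else 0)"
proof -
  define d where "d = int (\<sigma> j) - int (\<tau> k)"
  have "X j k = d + int n * (\<alpha> j - \<beta> k)"
    using a_decomp[OF j] a1_decomp[OF k] by (simp add: lin_form_def d_def algebra_simps)
  moreover have "d div int n = (if \<sigma> j < \<tau> k then -1 else 0)"
  proof (cases "\<sigma> j < \<tau> k")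
    case True
    have "(d + int n) div int n = 0" using True \<sigma>_less[OF j] \<tau>_less[OF k] by (simp add: d_def)
    then show ?thesis using True n_pos by (simp add: div_add_self2)
  qed (use \<sigma>_less[OF j] \<tau>_less[OF k] in \<open>simp add: d_def\<close>)
  ultimately show ?thesis using n_pos by simp
qed

lemma \<sigma>_last: "\<sigma> (n - 1) = 0"
  using \<sigma>_eq[of "n - 1"] n_pos by simp

lemma \<tau>_last: "\<tau> (n - 1) = 0"
  using \<tau>_eq[of "n - 1"] n_pos by simp

lemma \<sigma>_Suc:
  assumes "Suc j < n"
  shows "int (\<sigma> (Suc j)) = (int (\<sigma> j) + a) mod int n"
proof -
  have "a * int (Suc (Suc j)) = a * int (Suc j) + a" by (simp add: algebra_simps)
  then show ?thesis using assms by (simp add: \<sigma>_eq mod_add_left_eq)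
qed

lemma \<tau>_Suc:
  assumes "Suc k < n"
  shows "int (\<tau> (Suc k)) = (int (\<tau> k) + (a + 1)) mod int n"
proof -
  have "(a + 1) * int (Suc (Suc k)) = (a + 1) * int (Suc k) + (a + 1)" by (simp add: algebra_simps)
  then show ?thesis using assms by (simp add: \<tau>_eq mod_add_left_eq)
qed

lemma \<sigma>_inv [simp]: "\<sigma> (Hilbert_Choice.inv \<sigma> u) = u" and inv_\<sigma> [simp]: "Hilbert_Choice.inv \<sigma> (\<sigma> j) = j"
  using permutes_inverses[OF \<sigma>_permutes] by blast+

lemma inv_\<tau> [simp]: "Hilbert_Choice.inv \<tau> (\<tau> k) = k"
  using permutes_inverses(2)[OF \<tau>_permutes] .

lemma \<tau>_eq_0_iff: "k < n \<Longrightarrow> \<tau> k = 0 \<longleftrightarrow> k = n - 1"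
  by (metis \<tau>_last inv_\<tau>)

text \<open>The difference of the sums of the quotients is forced by the sums of the remainders, which
  are equal since \<open>\<sigma>\<close> and \<open>\<tau>\<close> are permutations.\<close>
lemma sum_\<alpha>_minus_sum_\<beta>: "(\<Sum>j<n. \<alpha> j) - (\<Sum>k<n. \<beta> k) = - ((int n + 1) div 2)"
proof -
  have "(\<Sum>j<n. int (\<sigma> j)) = (\<Sum>j<n. int (\<tau> j))"
    using sum.permute[OF \<sigma>_permutes, of int] sum.permute[OF \<tau>_permutes, of int] by (simp add: comp_def)
  moreover have "(\<Sum>j<n. a * int (Suc j)) = (\<Sum>j<n. int n * \<alpha> j + int (\<sigma> j))"
    by (intro sum.cong refl a_decomp) simp
  then have "(\<Sum>j<n. a * int (Suc j)) = int n * (\<Sum>j<n. \<alpha> j) + (\<Sum>j<n. int (\<sigma> j))"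
    by (simp add: sum.distrib sum_distrib_left)
  moreover have "(\<Sum>j<n. (a + 1) * int (Suc j)) = (\<Sum>j<n. int n * \<beta> j + int (\<tau> j))"
    by (intro sum.cong refl a1_decomp) simp
  then have "(\<Sum>j<n. (a + 1) * int (Suc j)) = int n * (\<Sum>j<n. \<beta> j) + (\<Sum>j<n. int (\<tau> j))"
    by (simp add: sum.distrib sum_distrib_left)
  moreover have "(\<Sum>j<n. (a + 1) * int (Suc j)) = (\<Sum>j<n. a * int (Suc j)) + (\<Sum>j<n. int (Suc j))"
    by (simp add: algebra_simps sum.distrib)
  ultimately have "int n * (2 * ((\<Sum>j<n. \<alpha> j) - (\<Sum>k<n. \<beta> k))) = int n * (- (int n + 1))"
    using double_sum_Suc_int[of n] by (simp add: algebra_simps)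
  then have "2 * ((\<Sum>j<n. \<alpha> j) - (\<Sum>k<n. \<beta> k)) = - (int n + 1)" using n_pos by simp
  moreover have "int n + 1 = 2 * ((int n + 1) div 2)" using odd_n by presburger
  ultimately show ?thesis by simp
qed

definition "\<rho> k = Hilbert_Choice.inv \<sigma> (\<tau> k)"

definition "\<rho>' k = Hilbert_Choice.inv \<sigma> (pred_mod n (\<tau> k))"

lemma \<sigma>_\<rho>: "\<sigma> (\<rho> k) = \<tau> k" and \<sigma>_\<rho>': "\<sigma> (\<rho>' k) = pred_mod n (\<tau> k)"
  by (simp_all add: \<rho>_def \<rho>'_def)

lemma inv_\<sigma>_less: "u < n \<Longrightarrow> Hilbert_Choice.inv \<sigma> u < n"
  using permutes_in_image[OF permutes_inv[OF \<sigma>_permutes]] by auto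

lemma \<rho>_less: "k < n \<Longrightarrow> \<rho> k < n" and \<rho>'_less: "\<rho>' k < n"
  using n_pos by (simp_all add: \<rho>_def \<rho>'_def inv_\<sigma>_less \<tau>_less pred_mod_def)

lemma lin_form_\<rho>: "k < n \<Longrightarrow> X (\<rho> k) k = int n * (\<alpha> (\<rho> k) - \<beta> k)"
  using a_decomp[OF \<rho>_less] a1_decomp \<sigma>_\<rho> by (simp add: lin_form_def algebra_simps)

lemma \<rho>'_0: "\<rho>' 0 = 0"
proof -
  have "int (\<sigma> 0) = a mod int n" using \<sigma>_eq[of 0] n_pos by simp
  also have "\<dots> = ((a + 1) mod int n + int n - 1) mod int n" by (simp add: mod_add_mod_minus_1)
  also have "\<dots> = int (pred_mod n (\<tau> 0))" using \<tau>_eq[of 0] n_pos by (simp add: pred_mod_def zmod_int of_nat_diff)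
  finally show ?thesis by (metis \<rho>'_def inv_\<sigma> of_nat_eq_iff)
qed

lemma \<rho>'_Suc:
  assumes k: "Suc k < n"
  shows "\<rho>' (Suc k) = Suc (\<rho> k)"
proof -
  have "\<tau> k \<noteq> 0" using \<tau>_eq_0_iff[of k] k by simp
  then have "\<rho> k \<noteq> n - 1" using \<sigma>_\<rho>[of k] \<sigma>_last by auto
  then have j: "Suc (\<rho> k) < n" using \<rho>_less[of k] k by simp
  have "int (\<sigma> (Suc (\<rho> k))) = (int (\<tau> k) + a) mod int n"
    using \<sigma>_Suc[OF j] by (simp add: \<sigma>_\<rho>)
  also have "\<dots> = ((int (\<tau> k) + (a + 1)) mod int n + int n - 1) mod int n"
    by (simp add: mod_add_mod_minus_1)
  also have "\<dots> = int (pred_mod n (\<tau> (Suc k)))"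
    using \<tau>_Suc[OF k] n_pos by (simp add: pred_mod_def zmod_int of_nat_diff)
  finally show ?thesis by (metis \<rho>'_def inv_\<sigma> of_nat_eq_iff)
qed

lemma \<rho>_last: "\<rho> (n - 1) = n - 1"
  by (metis \<rho>_def \<sigma>_last \<tau>_last inv_\<sigma>)

lemma div_\<rho>: "k < n \<Longrightarrow> X (\<rho> k) k div int n = \<alpha> (\<rho> k) - \<beta> k"
  using lin_form_\<rho> n_pos by simp

lemma div_\<rho>': "k < n \<Longrightarrow> X (\<rho>' k) k div int n = \<alpha> (\<rho>' k) - \<beta> k - (if k = n - 1 then 0 else 1)"
proof -
  assume k: "k < n"
  have "\<sigma> (\<rho>' k) < \<tau> k \<longleftrightarrow> \<tau> k \<noteq> 0"
    using \<tau>_less[OF k] by (simp add: \<sigma>_\<rho>' pred_mod_less_iff)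
  then show ?thesis using lin_form_div[OF \<rho>'_less k] \<tau>_eq_0_iff[OF k] by simp
qed

lemma div_\<rho>'_0: "X (\<rho>' 0) 0 div int n = -1"
  using n_pos by (simp add: \<rho>'_0 lin_form_def div_eq_minus1)

lemma div_\<rho>_last: "X (\<rho> (n - 1)) (n - 1) div int n = -1"
proof -
  have "X (n - 1) (n - 1) = int n * (-1)" using n_pos by (simp add: lin_form_def algebra_simps)
  then have "X (n - 1) (n - 1) div int n = -1"
    using n_pos by (simp only:) (rule nonzero_mult_div_cancel_left, simp)
  then show ?thesis by (simp only: \<rho>_last)
qed

lemma div_\<rho>'_Suc:
  assumes k: "Suc k < n"
  shows "X (\<rho>' (Suc k)) (Suc k) div int n = X (\<rho> k) k div int n - 1"
proof -
  have "X (\<rho>' (Suc k)) (Suc k) = X (\<rho> k) k - 1"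
    by (simp add: \<rho>'_Suc[OF k] lin_form_def algebra_simps)
  also have "\<dots> = -1 + int n * (\<alpha> (\<rho> k) - \<beta> k)" using lin_form_\<rho>[of k] k by simp
  finally have "X (\<rho>' (Suc k)) (Suc k) div int n = (\<alpha> (\<rho> k) - \<beta> k) + (-1) div int n"
    using n_pos by (simp only:) (rule div_mult_self2, simp)
  then show ?thesis using div_\<rho>[of k] k n_pos by (simp add: div_eq_minus1)
qed

definition "A u = \<alpha> (Hilbert_Choice.inv \<sigma> u)"

definition "B v = \<beta> (Hilbert_Choice.inv \<tau> v)"

lemma powi_B_minus_A_\<rho>:
  fixes t :: "'b :: field"
  assumes t: "t \<noteq> 0" and k: "k < n"
  shows "t powi B (\<tau> k) * t powi (- A (\<tau> k)) = t powi (- (X (\<rho> k) k div int n))"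
  using div_\<rho>[OF k] by (simp add: A_def B_def \<rho>_def flip: power_int_add[OF disjI1[OF t]])

lemma powi_B_minus_A_\<rho>':
  fixes t :: "'b :: field"
  assumes t: "t \<noteq> 0" and k: "k < n"
  shows "t powi B (\<tau> k) * t powi (- A (pred_mod n (\<tau> k)))
    = t powi (- (X (\<rho>' k) k div int n)) * (if k = n - 1 then 1 else inverse t)"
proof -
  have "t powi B (\<tau> k) * t powi (- A (pred_mod n (\<tau> k)))
      = t powi (- (X (\<rho>' k) k div int n) + - (if k = n - 1 then 0 else 1))"
    using div_\<rho>'[OF k] by (simp add: A_def B_def \<rho>'_def flip: power_int_add[OF disjI1[OF t]])
  also have "\<dots> = t powi (- (X (\<rho>' k) k div int n)) * (if k = n - 1 then 1 else inverse t)"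
    using t by (simp add: power_int_diff power_int_minus divide_inverse)
  finally show ?thesis .
qed

text \<open>The quadratic form of the rank-one correction telescopes, by \<open>div_\<rho>'_Suc\<close>.\<close>

lemma sum_powi_B_stair_solution:
  fixes t :: "'b :: field"
  assumes t: "t \<noteq> 0" "t \<noteq> 1"
  shows "(\<Sum>v<n. t powi B v * stair_solution n (inverse t) (\<lambda>u. t powi (- A u)) v) = t"
proof -
  define s where "s = inverse t"
  have s1: "s - 1 \<noteq> 0" using t by (simp add: s_def)
  define P where "P u = t powi (- A u)" for u
  define Q where "Q v = t powi B v" for v
  define U0 where "U0 k = t powi (- (X (\<rho> k) k div int n))" for k
  define U1 where "U1 k = t powi (- (X (\<rho>' k) k div int n))" for k
  obtain m where m: "n = Suc m" using n_pos by (cases n) auto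
  have reindex: "(\<Sum>v<n. f v) = (\<Sum>k<n. f (\<tau> k))" for f :: "nat \<Rightarrow> 'b"
    using sum.permute[OF \<tau>_permutes, of f] by (simp add: comp_def)
  have QP0: "Q (\<tau> k) * P (\<tau> k) = U0 k" if "k < n" for k
    using powi_B_minus_A_\<rho>[OF t(1) that] by (simp add: P_def Q_def U0_def)
  have QP1: "Q (\<tau> k) * P (pred_mod n (\<tau> k)) = U1 k * (if k = n - 1 then 1 else s)" if "k < n" for k
    using powi_B_minus_A_\<rho>'[OF t(1) that] by (simp add: P_def Q_def U1_def s_def)
  have U1_Suc: "U1 (Suc k) = t * U0 k" if "Suc k < n" for k
    using div_\<rho>'_Suc[OF that] t by (simp add: U0_def U1_def power_int_diff power_int_minus divide_inverse)
  have "(\<Sum>v<n. Q v * stair_solution n s P v)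
      = ((\<Sum>v<n. Q v * P (pred_mod n v)) - (\<Sum>v<n. Q v * P v)) / (s - 1) + Q 0 * P (n - 1)"
    by (rule sum_mult_stair_solution[OF n_pos])
  also have "Q 0 * P (n - 1) = U1 m"
    using QP1[of m] \<tau>_last m n_pos by (simp add: pred_mod_def)
  also have "(\<Sum>v<n. Q v * P (pred_mod n v)) = (\<Sum>k<n. U1 k * (if k = n - 1 then 1 else s))"
    unfolding reindex[of "\<lambda>v. Q v * P (pred_mod n v)"] by (intro sum.cong refl QP1) simp
  also have "\<dots> = s * (\<Sum>k<m. U1 k) + U1 m"
    using m by (simp add: sum_distrib_left mult.commute)
  also have "(\<Sum>v<n. Q v * P v) = (\<Sum>k<n. U0 k)"
    unfolding reindex[of "\<lambda>v. Q v * P v"] by (intro sum.cong refl QP0) simp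
  also have "\<dots> = (\<Sum>k<m. U0 k) + t"
    using m div_\<rho>_last by (simp add: U0_def)
  also have "(\<Sum>k<m. U1 k) = t + t * (\<Sum>k<m. U0 k) - U1 m"
  proof -
    have "(\<Sum>k<Suc m. U1 k) = U1 0 + (\<Sum>k<m. U1 (Suc k))" by (rule sum.lessThan_Suc_shift)
    also have "(\<Sum>k<m. U1 (Suc k)) = (\<Sum>k<m. t * U0 k)"
      using m by (intro sum.cong refl U1_Suc) simp
    finally show ?thesis using div_\<rho>'_0 by (simp add: U1_def sum_distrib_left eq_diff_eq)
  qed
  finally have "(\<Sum>v<n. Q v * stair_solution n s P v) =
    (s * (t + t * (\<Sum>k<m. U0 k) - U1 m) + U1 m - ((\<Sum>k<m. U0 k) + t)) / (s - 1) + U1 m" .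
  also have "\<dots> = t" using t s1 by (simp add: s_def field_simps)
  finally show ?thesis by (simp add: P_def[abs_def] Q_def s_def)
qed

lemma A_\<sigma> [simp]: "A (\<sigma> j) = \<alpha> j" and B_\<tau> [simp]: "B (\<tau> k) = \<beta> k"
  by (simp_all add: A_def B_def)

lemma det_lin_form_reindex:
  fixes t :: "'b :: field"
  shows "det (mat n n (\<lambda>(j, k). t powi (X j k div int n) - 1)) = of_int (Jacobi (a * (a + 1)) n) *
    det (mat n n (\<lambda>(u, v). t powi (A u - B v - (if u < v then 1 else 0)) - 1))"
proof -
  define g where "g u v = t powi (A u - B v - (if u < v then 1 else 0)) - 1" for u v
  have "mat n n (\<lambda>(j, k). t powi (X j k div int n) - 1) = mat n n (\<lambda>(j, k). g (\<sigma> j) (\<tau> k))"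
    by (rule eq_matI) (auto simp: g_def lin_form_div)
  moreover have "\<sigma> permutes {0..<n}" "\<tau> permutes {0..<n}"
    using \<sigma>_permutes \<tau>_permutes by (simp_all add: atLeast0LessThan)
  ultimately show ?thesis
    using det_mat_permute_rows_cols[of \<sigma> n \<tau> g] sign_\<sigma>_\<tau> by (simp add: g_def[abs_def])
qed

lemma det_powi_A_minus_B:
  fixes t :: "'b :: field"
  assumes t: "t \<noteq> 0" "t \<noteq> 1"
  shows "det (mat n n (\<lambda>(u, v). t powi (A u - B v - (if u < v then 1 else 0)) - 1))
    = t powi (- ((int n + 1) div 2)) * (1 - inverse t) ^ (n - 1) * (1 - t)"
proof -
  define P where "P u = t powi (- A u)" for u
  define Q where "Q v = t powi B v" for v
  have "t powi (A u - B v - (if u < v then 1 else 0)) - 1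
      = t powi A u * ((if u < v then inverse t else 1) - P u * Q v) * t powi (- B v)" for u v
    unfolding powi_diff_minus_one[OF t(1)] by (simp add: P_def Q_def power_int_minus)
  then have "det (mat n n (\<lambda>(u, v). t powi (A u - B v - (if u < v then 1 else 0)) - 1))
      = (\<Prod>u<n. t powi A u) * (\<Prod>v<n. t powi (- B v))
        * det (mat n n (\<lambda>(u, v). (if u < v then inverse t else 1) - P u * Q v))"
    by (simp add: det_mat_scale)
  also have "(\<Prod>u<n. t powi A u) * (\<Prod>v<n. t powi (- B v)) = t powi (- ((int n + 1) div 2))"
  proof -
    have "(\<Sum>u<n. A u) = (\<Sum>j<n. \<alpha> j)" "(\<Sum>v<n. B v) = (\<Sum>k<n. \<beta> k)"
      using sum.permute[OF \<sigma>_permutes, of A] sum.permute[OF \<tau>_permutes, of B] by (simp_all add: comp_def)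
    then show ?thesis using sum_\<alpha>_minus_sum_\<beta> t
      by (simp add: prod_power_int sum_negf flip: power_int_add)
  qed
  also have "det (mat n n (\<lambda>(u, v). (if u < v then inverse t else 1) - P u * Q v))
      = (1 - inverse t) ^ (n - 1) * (1 - (\<Sum>v<n. Q v * stair_solution n (inverse t) P v))"
    using t by (intro det_stair_minus_rank_one n_pos) simp
  also have "(\<Sum>v<n. Q v * stair_solution n (inverse t) P v) = t"
    using sum_powi_B_stair_solution[OF t] by (simp add: P_def[abs_def] Q_def)
  finally show ?thesis by simp
qed

theorem det_powi_lin_form:
  fixes t :: "'b :: field"
  assumes t: "t \<noteq> 0" "t \<noteq> 1"
  shows "det (mat n n (\<lambda>(j, k). t powi (X j k div int n) - 1))
    = - of_int (Jacobi (a * (a + 1)) n) * (t - 1) ^ n * t powi ((1 - 3 * int n) div 2)"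
proof -
  define J :: 'b where "J = of_int (Jacobi (a * (a + 1)) n)"
  have e1: "(1 - inverse t) ^ (n - 1) = t powi (- int (n - 1)) * (t - 1) ^ (n - 1)"
    using t by (simp add: power_int_minus power_mult_distrib field_simps flip: power_inverse)
  have e2: "t powi (- ((int n + 1) div 2)) * t powi (- int (n - 1)) = t powi ((1 - 3 * int n) div 2)"
  proof -
    have "- ((int n + 1) div 2) + - int (n - 1) = (1 - 3 * int n) div 2"
      using odd_n n_pos by (auto elim!: oddE simp: of_nat_diff)
    then show ?thesis using t by (simp flip: power_int_add)
  qed
  have e3: "(t - 1) ^ (n - 1) * (1 - t) = - ((t - 1) ^ n)"
    using n_pos by (cases n) (simp_all add: algebra_simps)
  have "det (mat n n (\<lambda>(j, k). t powi (X j k div int n) - 1))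
      = J * (t powi (- ((int n + 1) div 2)) * (1 - inverse t) ^ (n - 1) * (1 - t))"
    unfolding det_lin_form_reindex det_powi_A_minus_B[OF t] J_def ..
  also have "\<dots> = J * (t powi (- ((int n + 1) div 2)) * t powi (- int (n - 1))) * ((t - 1) ^ (n - 1) * (1 - t))"
    by (simp only: e1 mult_ac)
  also have "\<dots> = - J * (t - 1) ^ n * t powi ((1 - 3 * int n) div 2)"
    by (simp only: e2 e3) (simp add: algebra_simps)
  finally show ?thesis by (simp add: J_def)
qed

end

text \<open>If \<open>p\<close> divides \<open>n\<close> and \<open>a\<close>, then shifting the row index by \<open>n / p\<close> adds a constant to
  every exponent, so rows \<open>0\<close>, \<open>n / p\<close>, \<open>2 n / p\<close> are dependent; similarly for columns
  if \<open>p\<close> divides \<open>a + 1\<close>.\<close>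
lemma det_powi_lin_form_eq_0:
  fixes t :: "'a :: field"
  assumes n: "odd n" and t: "t \<noteq> 0" and p: "prime p" "p dvd n"
    and dvd: "int p dvd a \<or> int p dvd a + 1"
  shows "det (mat n n (\<lambda>(j, k). t powi (lin_form a j k div int n) - 1)) = 0"
proof -
  obtain h where nh: "n = p * h" using p by (auto elim: dvdE)
  have n0: "n > 0" using n by (rule odd_pos)
  have "odd p" using n nh by simp
  then have "3 \<le> p" using prime_ge_2_nat[OF p(1)] by presburger
  moreover have "h > 0" using n0 nh by (intro Nat.gr0I) auto
  ultimately have h: "0 < h" "2 * h < n" unfolding nh by simp_all
  from dvd show ?thesis
  proof
    assume "int p dvd a"
    then obtain c where "a = int p * c" by (elim dvdE)
    then have "lin_form a (k + h) j = lin_form a k j + c * int n" for j k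
      by (simp add: lin_form_shift_row nh mult_ac)
    then have "lin_form a (k + h) j div int n = lin_form a k j div int n + c" for j k
      using div_add_mult_self[OF n0] by simp
    then have "det (mat n n (\<lambda>(j, k). t powi (lin_form a k j div int n) - 1)) = 0"
      by (rule det_powi_minus_one_quasiperiodic[OF t h])
    then show ?thesis
      using det_mat_transpose[of n "\<lambda>j k. t powi (lin_form a j k div int n) - 1"] by simp
  next
    assume "int p dvd a + 1"
    then obtain c where "a + 1 = int p * c" by (elim dvdE)
    then have "lin_form a j (k + h) = lin_form a j k + (- c) * int n" for j k
      by (simp add: lin_form_shift_col nh mult_ac)
    then have "lin_form a j (k + h) div int n = lin_form a j k div int n + (- c)" for j k
      using div_add_mult_self[OF n0] by presburger
    then show ?thesis by (rule det_powi_minus_one_quasiperiodic[OF t h])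
  qed
qed

lemma not_coprime_imp_prime_dvd:
  assumes "\<not> coprime x (int n)" "n > 0"
  shows "\<exists>p. prime p \<and> p dvd n \<and> int p dvd x"
proof -
  define g where "g = gcd x (int n)"
  have "g \<ge> 0" "nat g \<noteq> 1"
    using assms by (auto simp: g_def coprime_iff_gcd_eq_1)
  then obtain p where p: "prime p" "p dvd nat g" using prime_factor_nat by blast
  then have "int p dvd g" using \<open>g \<ge> 0\<close> by (metis int_dvd_int_iff int_nat_eq)
  then have "int p dvd x" "p dvd n" by (auto simp: g_def intro: dvd_trans)
  then show ?thesis using p by blast
qed

theorem det_powi_floor_matrix:
  fixes t :: "'a :: field"
  assumes n: "odd n" and t: "t \<noteq> 0"
  shows "det (mat n n (\<lambda>(j, k). t powi (lin_form a j k div int n) - 1))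
    = - of_int (Jacobi (a * (a + 1)) n) * (t - 1) ^ n * t powi ((1 - 3 * int n) div 2)"
proof (cases "t = 1")
  case True
  have "mat n n (\<lambda>(j, k). t powi (lin_form a j k div int n) - 1) = 0\<^sub>m n n"
    using True by (intro eq_matI) auto
  then show ?thesis using True n by (simp add: odd_pos zero_power)
next
  case t1: False
  show ?thesis
  proof (cases "coprime a (int n) \<and> coprime (a + 1) (int n)")
    case True
    then interpret floor_matrix_coprime a n using n by unfold_locales auto
    show ?thesis by (rule det_powi_lin_form[OF t t1])
  next
    case False
    have n0: "n > 0" using n by (rule odd_pos)
    then obtain p where p: "prime p" "p dvd n" "int p dvd a \<or> int p dvd a + 1"
      using False not_coprime_imp_prime_dvd[OF _ n0, of a] not_coprime_imp_prime_dvd[OF _ n0, of "a + 1"]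
      by blast
    then have "Jacobi (a * (a + 1)) n = 0"
      using n0 by (auto intro: Jacobi_eq_0)
    then show ?thesis using det_powi_lin_form_eq_0[OF n t p] by simp
  qed
qed

lemma tendsto_powi_difference_quotient:
  "((\<lambda>t::real. (t powi k - 1) / (t - 1)) \<longlongrightarrow> real_of_int k) (at_right 1)"
proof -
  have "((\<lambda>x::real. x powi k) has_field_derivative (of_int k * 1 powi (k - 1) * 1)) (at 1)"
    by (rule DERIV_power_int) (auto intro: DERIV_ident)
  then have "((\<lambda>y::real. (y powi k - 1) / (y - 1)) \<longlongrightarrow> real_of_int k) (at 1)"
    by (simp add: has_field_derivative_iff)
  then show ?thesis by (rule tendsto_mono[OF at_le, rotated]) simp
qed

lemma det_floor_matrix_difference_quotient:
  fixes t :: "'a :: field"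
  assumes n: "odd n" and t: "t \<noteq> 0" "t \<noteq> 1"
  shows "det (mat n n (\<lambda>(j, k). (t powi (lin_form a j k div int n) - 1) / (t - 1)))
    = - of_int (Jacobi (a * (a + 1)) n) * t powi ((1 - 3 * int n) div 2)"
proof -
  have "mat n n (\<lambda>(j, k). (t powi (lin_form a j k div int n) - 1) / (t - 1))
      = inverse (t - 1) \<cdot>\<^sub>m mat n n (\<lambda>(j, k). t powi (lin_form a j k div int n) - 1)"
    by (rule eq_matI) (auto simp: divide_inverse mult.commute)
  then show ?thesis
    using det_powi_floor_matrix[OF n t(1), of a] t by (simp add: power_inverse field_simps)
qed

theorem det_floor_matrix:
  assumes n: "odd n"
  shows "det (mat n n (\<lambda>(j, k). lin_form a j k div int n)) = - Jacobi (a * (a + 1)) n"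
proof -
  define m where "m j k = lin_form a j k div int n" for j k
  define J where "J = real_of_int (Jacobi (a * (a + 1)) n)"
  define e where "e = (1 - 3 * int n) div 2"
  define D where "D t = det (mat n n (\<lambda>(j, k). (t powi m j k - 1) / (t - 1)))" for t :: real
  have "\<forall>\<^sub>F t in at_right 1. D t = - J * t powi e"
    using eventually_at_right_less
    by (rule eventually_mono) (simp add: D_def m_def J_def e_def det_floor_matrix_difference_quotient[OF n])
  moreover have "((\<lambda>t. - J * t powi e) \<longlongrightarrow> - J) (at_right 1)"
    by (auto intro!: tendsto_eq_intros)
  ultimately have lim: "(D \<longlongrightarrow> - J) (at_right 1)"
    by (simp add: tendsto_cong)
  have "(D \<longlongrightarrow> det (mat n n (\<lambda>(j, k). real_of_int (m j k)))) (at_right 1)"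
    unfolding D_def by (rule tendsto_det) (rule tendsto_powi_difference_quotient)
  then have "det (mat n n (\<lambda>(j, k). real_of_int (m j k))) = - J"
    using tendsto_unique[OF _ _ lim] by simp
  moreover have "mat n n (\<lambda>(j, k). real_of_int (m j k)) = map_mat of_int (mat n n (\<lambda>(j, k). m j k))"
    by (rule eq_matI) auto
  ultimately show ?thesis by (simp add: m_def J_def of_int_hom.hom_det)
qed

theorem corollary1p1:
  fixes a :: int and n :: nat
  assumes "odd n"
  shows "det (mat n n (\<lambda>(j, k). \<lfloor>real_of_int (a * int (j + 1) - (a + 1) * int (k + 1)) / real n\<rfloor>))
           = - Jacobi (a * (a + 1)) n \<and>
         det (mat n n (\<lambda>(j, k). (2::real) powi \<lfloor>real_of_int (a * int (j + 1) - (a + 1) * int (k + 1)) / real n\<rfloor> - 1))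
           = - real_of_int (Jacobi (a * (a + 1)) n) * (2::real) powi ((1 - 3 * int n) div 2)"
proof -
  have "\<lfloor>real_of_int (a * int (j + 1) - (a + 1) * int (k + 1)) / real n\<rfloor> = lin_form a j k div int n" for j k
    using floor_divide_of_int_eq[of "lin_form a j k" "int n", where 'a = real] by (simp add: lin_form_def)
  then show ?thesis
    using det_floor_matrix[OF assms] det_powi_floor_matrix[OF assms, of "2 :: real" a] by simp
qed

end
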